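(* Let $n\ge 3$. Then $I(\mathring H_{2,n})\simeq\mathbb{S}^2$, $I(\mathring H_{3,n})\simeq\mathbb{S}^3$, and $I(\mathring H_{k,n})\simeq\Sigma^2 I(H_{k-2,n})$ for all $k\ge 4$.
   Context: $P_k$ is the path with vertices $u_1,\dots,u_k$; $K_n$ is the complete graph on $\{1,\dots,n\}$; $P_k\times K_n$ is the categorical product (vertices $(u_i,j)$, with $(u_i,a)$ adjacent to $(u_{i'},b)$ iff $|i-i'|=1$ and $a\ne b$). For $k\ge 2$, $H_{k,n}$ is obtained from $P_k\times K_n$ by adding new vertices $v_1,v_2$ and the edges $(u_1,i)v_1$ for all $i\ge2$ and $(u_k,i)v_2$ for all $i\ne2$; $\mathring H_{k,n}$ is obtained from $H_{k,n}$ by adding new vertices $w_1,w_2$ and the edges $v_1w_1$, $v_2w_2$. $I(G)$ is the independence complex (simplices = non-empty independent vertex sets); $\Sigma$ is suspension. *)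

theory Defs
  imports "HOL-Analysis.Analysis"
begin

text \<open>A (finite simple) graph is given by a vertex set V and an edge set E of 2-element subsets of V.\<close>

definition independence_complex :: "'a set \<Rightarrow> 'a set set \<Rightarrow> 'a set set" where
  "independence_complex V E = {S. S \<noteq> {} \<and> finite S \<and> S \<subseteq> V \<and> (\<forall>e\<in>E. \<not> e \<subseteq> S)}"

text \<open>Geometric realization of an abstract simplicial complex K (a set of nonempty finite faces):
  the set of finitely supported convex weight functions whose support is a face,
  with the subspace topology of the product topology on 'a \<Rightarrow> real.\<close>

definition geometric_realization :: "'a set set \<Rightarrow> ('a \<Rightarrow> real) topology" where
  "geometric_realization K = subtopology (powertop_real UNIV)
     {f. (\<forall>x. 0 \<le> f x) \<and> finite {x. f x \<noteq> 0} \<and> {x. f x \<noteq> 0} \<in> K \<and> sum f {x. f x \<noteq> 0} = 1}"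

definition quotient_topology :: "'a topology \<Rightarrow> ('a \<Rightarrow> 'b) \<Rightarrow> 'b topology" where
  "quotient_topology X q = topology (\<lambda>U. U \<subseteq> q ` topspace X \<and> openin X {x \<in> topspace X. q x \<in> U})"

datatype 'a susp_pt = North | South | Mid 'a real

definition suspension :: "'a topology \<Rightarrow> 'a susp_pt topology" where
  "suspension X = quotient_topology (prod_topology X (subtopology euclideanreal {-1..1}))
     (\<lambda>(x, t). if t = 1 then North else if t = -1 then South else Mid x t)"

datatype vert = U nat nat | V1 | V2 | W1 | W2

definition H_verts :: "nat \<Rightarrow> nat \<Rightarrow> vert set" where
  "H_verts k n = {U i j | i j. 1 \<le> i \<and> i \<le> k \<and> 1 \<le> j \<and> j \<le> n} \<union> {V1, V2}"

definition H_edges :: "nat \<Rightarrow> nat \<Rightarrow> vert set set" where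
  "H_edges k n =
     {{U i a, U (i + 1) b} | i a b. 1 \<le> i \<and> i + 1 \<le> k \<and> 1 \<le> a \<and> a \<le> n \<and> 1 \<le> b \<and> b \<le> n \<and> a \<noteq> b}
   \<union> {{U 1 i, V1} | i. 2 \<le> i \<and> i \<le> n}
   \<union> {{U k i, V2} | i. 1 \<le> i \<and> i \<le> n \<and> i \<noteq> 2}"

definition Hr_verts :: "nat \<Rightarrow> nat \<Rightarrow> vert set" where
  "Hr_verts k n = H_verts k n \<union> {W1, W2}"

definition Hr_edges :: "nat \<Rightarrow> nat \<Rightarrow> vert set set" where
  "Hr_edges k n = H_edges k n \<union> {{V1, W1}, {V2, W2}}"

end

theory Submission
  imports Defs
begin

(* A point of the realization of I(G) is a weighting of the vertices by nonnegative reals with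
   total weight 1 that vanishes at one end of every edge. Two operations on weightings do all
   the work.

   Folding: let every vertex x of a set R have a partner p x outside R whose neighbours are all
   neighbours of x, with no edges among the partners. Moving the weight of each x to p x, linearly
   in time, deformation retracts I(G) onto I(G - R).

   Suspending: let {a, b} be an edge with no other edges at a and b. The weight difference
   t = f a - f b is a suspension coordinate, and rescaling the remaining weights by 1 - |t|
   identifies I(G) with the suspension of I(G - a - b).

   In ring-H_{k,n} the neighbours (u_1, i), i >= 2, of v_1 fold onto w_1 and the neighbours
   (u_k, i), i ~= 2, of v_2 fold onto w_2. What remains is the two isolated edges v_1 w_1 and
   v_2 w_2 next to a copy of H_{k-2,n} in which (u_1, 1) and (u_k, 2) play the roles of v_1 and v_2,
   hence the double suspension. For k = 2, and for k = 3 after folding (u_2, j), j >= 3, onto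
   (u_2, 1), what remains is a perfect matching with 3 resp. 4 edges. Its independence complex is
   the boundary of a cross-polytope, which the normalised coordinates f(a_i) - f(b_i) map
   homeomorphically onto the round sphere. *)

section \<open>Realizations of independence complexes\<close>

abbreviation indep_realization :: "'a set \<Rightarrow> 'a set set \<Rightarrow> ('a \<Rightarrow> real) topology" where
  "indep_realization V E \<equiv> geometric_realization (independence_complex V E)"

definition indep_weighting :: "'a set \<Rightarrow> 'a set set \<Rightarrow> ('a \<Rightarrow> real) \<Rightarrow> bool" where
  "indep_weighting V E f \<longleftrightarrow>
     (\<forall>x. 0 \<le> f x) \<and> (\<forall>x. x \<notin> V \<longrightarrow> f x = 0) \<and> sum f V = 1 \<and>
     (\<forall>u w. {u, w} \<in> E \<longrightarrow> f u = 0 \<or> f w = 0)"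

lemma in_indep_realization:
  assumes V: "finite V" and E: "\<forall>e\<in>E. card e = 2"
  shows "f \<in> topspace (indep_realization V E) \<longleftrightarrow> indep_weighting V E f"
proof -
  let ?S = "{x. f x \<noteq> 0}"
  have sum_support: "sum f V = sum f ?S" if "?S \<subseteq> V"
    using V that by (intro sum.mono_neutral_right) auto
  have edges: "(\<forall>e\<in>E. \<not> e \<subseteq> ?S) \<longleftrightarrow> (\<forall>u w. {u, w} \<in> E \<longrightarrow> f u = 0 \<or> f w = 0)"
    using E by (fastforce simp: card_2_iff)
  have "f \<in> topspace (indep_realization V E) \<longleftrightarrow>
      (\<forall>x. 0 \<le> f x) \<and> ?S \<noteq> {} \<and> finite ?S \<and> ?S \<subseteq> V \<and> (\<forall>e\<in>E. \<not> e \<subseteq> ?S) \<and> sum f ?S = 1"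
    (is "_ \<longleftrightarrow> ?simplex")
    by (auto simp: geometric_realization_def independence_complex_def)
  also have "\<dots> \<longleftrightarrow> indep_weighting V E f"
  proof
    assume "indep_weighting V E f"
    moreover from this have "?S \<subseteq> V" by (auto simp: indep_weighting_def)
    moreover from this have "finite ?S" using V finite_subset by blast
    ultimately show ?simplex
      unfolding edges indep_weighting_def using sum_support by (metis sum.empty zero_neq_one)
  qed (auto simp: indep_weighting_def edges sum_support)
  finally show ?thesis .
qed

lemma continuous_map_into_geometric_realization:
  "continuous_map X (geometric_realization K) h \<longleftrightarrow>
     (\<forall>y. continuous_map X euclideanreal (\<lambda>x. h x y)) \<and> h \<in> topspace X \<rightarrow> topspace (geometric_realization K)"
  unfolding geometric_realization_def continuous_map_in_subtopology continuous_map_componentwise_UNIV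
  by simp

lemma continuous_map_geometric_realization_eval [continuous_intros]:
  "continuous_map (geometric_realization K) euclideanreal (\<lambda>f. f y)"
  unfolding geometric_realization_def
  by (intro continuous_map_from_subtopology continuous_map_product_projection) auto

lemma Hausdorff_space_geometric_realization: "Hausdorff_space (geometric_realization K)"
  unfolding geometric_realization_def
  by (intro Hausdorff_space_subtopology) (simp add: Hausdorff_space_product_topology)

lemma topspace_indep_realization_eq:
  assumes V: "finite V" and E: "\<forall>e\<in>E. card e = 2"
  shows "topspace (indep_realization V E) =
    {f. sum f V = 1 \<and> (\<forall>u w. {u, w} \<in> E \<longrightarrow> f u * f w = 0)} \<inter>
    PiE UNIV (\<lambda>x. if x \<in> V then {0..1::real} else {0})"
proof (intro set_eqI iffI)
  fix f :: "'a \<Rightarrow> real" assume "f \<in> topspace (indep_realization V E)"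
  then have f: "indep_weighting V E f" by (simp add: in_indep_realization[OF V E])
  have "f x \<le> 1" if "x \<in> V" for x
    using f that V member_le_sum[of x V f] by (auto simp: indep_weighting_def)
  with f show "f \<in> {f. sum f V = 1 \<and> (\<forall>u w. {u, w} \<in> E \<longrightarrow> f u * f w = 0)} \<inter>
      PiE UNIV (\<lambda>x. if x \<in> V then {0..1} else {0})"
    by (auto simp: indep_weighting_def PiE_UNIV_domain)
next
  fix f :: "'a \<Rightarrow> real" assume "f \<in> {f. sum f V = 1 \<and> (\<forall>u w. {u, w} \<in> E \<longrightarrow> f u * f w = 0)} \<inter>
      PiE UNIV (\<lambda>x. if x \<in> V then {0..1} else {0})"
  then have "indep_weighting V E f"
    by (auto simp: indep_weighting_def PiE_UNIV_domain Pi_iff split: if_splits)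
  then show "f \<in> topspace (indep_realization V E)" by (simp add: in_indep_realization[OF V E])
qed

lemma compact_space_indep_realization:
  assumes V: "finite V" and E: "\<forall>e\<in>E. card e = 2"
  shows "compact_space (indep_realization V E)"
proof -
  let ?P = "powertop_real (UNIV :: 'a set)"
  have eval: "continuous_map ?P euclideanreal (\<lambda>f. f x)" for x
    by (rule continuous_map_product_projection) simp
  have "closedin ?P {f \<in> topspace ?P. sum f V \<in> {1}}"
    by (intro closedin_continuous_map_preimage[where Y = euclideanreal])
      (auto intro!: continuous_intros eval V)
  moreover have "closedin ?P {f \<in> topspace ?P. f u * f w \<in> {0}}" for u w
    by (intro closedin_continuous_map_preimage[where Y = euclideanreal])
      (auto intro!: continuous_intros eval)
  moreover have "closedin ?P UNIV"
    using closedin_topspace[of ?P] by simp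
  ultimately have "closedin ?P ({f. sum f V = 1} \<inter> \<Inter>(insert UNIV {{f. f u * f w = 0} | u w. {u, w} \<in> E}))"
    by (intro closedin_Int closedin_Inter) auto
  moreover have "{f :: 'a \<Rightarrow> real. sum f V = 1 \<and> (\<forall>u w. {u, w} \<in> E \<longrightarrow> f u * f w = 0)} =
      {f. sum f V = 1} \<inter> \<Inter>(insert UNIV {{f. f u * f w = 0} | u w. {u, w} \<in> E})"
    by auto
  ultimately have "closedin ?P {f. sum f V = 1 \<and> (\<forall>u w. {u, w} \<in> E \<longrightarrow> f u * f w = 0)}"
    by simp
  moreover have "compactin ?P (PiE UNIV (\<lambda>x. if x \<in> V then {0..1} else {0}))"
    unfolding compactin_PiE by auto
  ultimately have "compactin ?P (topspace (indep_realization V E))"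
    unfolding topspace_indep_realization_eq[OF V E] by (rule closed_Int_compactin)
  then have "compact_space (subtopology ?P (topspace (indep_realization V E)))"
    by (rule compact_space_subtopology)
  then show ?thesis
    by (simp add: geometric_realization_def)
qed

section \<open>Quotient topology and suspension\<close>

lemma openin_quotient_topology:
  "openin (quotient_topology X q) W \<longleftrightarrow> W \<subseteq> q ` topspace X \<and> openin X {x \<in> topspace X. q x \<in> W}"
proof -
  let ?L = "\<lambda>W. W \<subseteq> q ` topspace X \<and> openin X {x \<in> topspace X. q x \<in> W}"
  have Int: "?L (S \<inter> T)" if "?L S" "?L T" for S T
  proof -
    have "openin X ({x \<in> topspace X. q x \<in> S} \<inter> {x \<in> topspace X. q x \<in> T})"
      using that by auto
    moreover have "{x \<in> topspace X. q x \<in> S} \<inter> {x \<in> topspace X. q x \<in> T} = {x \<in> topspace X. q x \<in> S \<inter> T}"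
      by auto
    ultimately show ?thesis using that by auto
  qed
  have Union: "?L (\<Union>K)" if "\<forall>S\<in>K. ?L S" for K
  proof -
    have "openin X (\<Union>S\<in>K. {x \<in> topspace X. q x \<in> S})" using that by auto
    moreover have "(\<Union>S\<in>K. {x \<in> topspace X. q x \<in> S}) = {x \<in> topspace X. q x \<in> \<Union>K}" by auto
    ultimately show ?thesis using that by auto
  qed
  have "istopology ?L"
    unfolding istopology_def using Int Union by blast
  then show ?thesis
    unfolding quotient_topology_def by (simp add: topology_inverse')
qed

lemma topspace_quotient_topology: "topspace (quotient_topology X q) = q ` topspace X"
proof (rule subset_antisym)
  show "topspace (quotient_topology X q) \<subseteq> q ` topspace X"
    using openin_quotient_topology[of X q "topspace (quotient_topology X q)"] by auto
  have "{x \<in> topspace X. q x \<in> q ` topspace X} = topspace X" by auto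
  then have "openin (quotient_topology X q) (q ` topspace X)"
    by (simp add: openin_quotient_topology)
  then show "q ` topspace X \<subseteq> topspace (quotient_topology X q)"
    by (rule openin_subset)
qed

lemma continuous_map_quotient_topology: "continuous_map X (quotient_topology X q) q"
  unfolding continuous_map_def topspace_quotient_topology by (auto simp: openin_quotient_topology)

lemma continuous_map_from_quotient_topology:
  assumes "continuous_map X Y (\<lambda>x. g (q x))"
  shows "continuous_map (quotient_topology X q) Y g"
  unfolding continuous_map_def topspace_quotient_topology
proof (intro conjI allI impI)
  show "g \<in> q ` topspace X \<rightarrow> topspace Y"
    using assms by (auto simp: continuous_map_def)
  fix W assume "openin Y W"
  then have "openin X {x \<in> topspace X. g (q x) \<in> W}"
    using assms by (auto simp: continuous_map_def)
  then show "openin (quotient_topology X q) {y \<in> q ` topspace X. g y \<in> W}"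
    unfolding openin_quotient_topology by (auto elim!: back_subst[where P = "openin X"])
qed

definition susp_quotient :: "'a \<times> real \<Rightarrow> 'a susp_pt" where
  "susp_quotient = (\<lambda>(x, t). if t = 1 then North else if t = -1 then South else Mid x t)"

lemma suspension_eq_quotient:
  "suspension X = quotient_topology (prod_topology X (top_of_set {-1..1})) susp_quotient"
  by (simp add: suspension_def susp_quotient_def)

lemma topspace_suspension: "topspace (suspension X) = susp_quotient ` (topspace X \<times> {-1..1})"
  by (simp add: suspension_eq_quotient topspace_quotient_topology)

lemma map_susp_pt_susp_quotient: "map_susp_pt h (susp_quotient (x, t)) = susp_quotient (h x, t)"
  by (simp add: susp_quotient_def)

lemma continuous_map_suspension_map:
  assumes "continuous_map X Y h"
  shows "continuous_map (suspension X) (suspension Y) (map_susp_pt h)"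
  unfolding suspension_eq_quotient
proof (rule continuous_map_from_quotient_topology)
  let ?I = "top_of_set {-1..1::real}"
  have "continuous_map (prod_topology X ?I) Y (\<lambda>z. h (fst z))"
    using continuous_map_compose[OF continuous_map_fst assms] by (simp add: o_def)
  then have "continuous_map (prod_topology X ?I) (prod_topology Y ?I) (\<lambda>(x, t). (h x, t))"
    by (simp add: continuous_map_paired case_prod_unfold continuous_map_snd)
  then show "continuous_map (prod_topology X ?I) (quotient_topology (prod_topology Y ?I) susp_quotient)
      (\<lambda>z. map_susp_pt h (susp_quotient z))"
  proof -
    have "(\<lambda>z. map_susp_pt h (susp_quotient z)) = susp_quotient \<circ> (\<lambda>(x, t). (h x, t))"
      by (rule ext) (simp add: map_susp_pt_susp_quotient split: prod.split)
    then show ?thesis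
      using continuous_map_compose[OF \<open>continuous_map _ (prod_topology Y ?I) _\<close>
          continuous_map_quotient_topology] by simp
  qed
qed

lemma homeomorphic_space_suspension:
  assumes "X homeomorphic_space Y"
  shows "suspension X homeomorphic_space suspension Y"
proof -
  obtain h k where hk: "homeomorphic_maps X Y h k"
    using assms by (auto simp: homeomorphic_space_def)
  have "homeomorphic_maps (suspension X) (suspension Y) (map_susp_pt h) (map_susp_pt k)"
    unfolding homeomorphic_maps_def
  proof (intro conjI ballI continuous_map_suspension_map)
    show "continuous_map X Y h" "continuous_map Y X k"
      using hk by (auto simp: homeomorphic_maps_def)
    fix z assume "z \<in> topspace (suspension X)"
    then obtain x t where "x \<in> topspace X" "z = susp_quotient (x, t)"
      by (auto simp: topspace_suspension)
    then show "map_susp_pt k (map_susp_pt h z) = z"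
      using hk by (simp add: homeomorphic_maps_def map_susp_pt_susp_quotient)
  next
    fix z assume "z \<in> topspace (suspension Y)"
    then obtain y t where "y \<in> topspace Y" "z = susp_quotient (y, t)"
      by (auto simp: topspace_suspension)
    then show "map_susp_pt h (map_susp_pt k z) = z"
      using hk by (simp add: homeomorphic_maps_def map_susp_pt_susp_quotient)
  qed
  then show ?thesis
    by (rule homeomorphic_maps_imp_homeomorphic_space)
qed

lemma compact_space_suspension:
  assumes "compact_space X"
  shows "compact_space (suspension X)"
proof -
  have "compact_space (prod_topology X (top_of_set {-1..1::real}))"
    using assms by (simp add: compact_space_prod_topology compact_space_subtopology)
  then show ?thesis
    unfolding suspension_eq_quotient compact_space_def topspace_quotient_topology
    by (rule image_compactin[OF _ continuous_map_quotient_topology])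
qed

section \<open>Folding vertices\<close>

lemma indep_weighting_Diff:
  assumes "finite V"
  shows "indep_weighting (V - R) E f \<longleftrightarrow> indep_weighting V E f \<and> (\<forall>x\<in>R. f x = 0)"
proof -
  have "sum f V = sum f (V - R)" if "\<forall>x\<in>R. f x = 0"
    using assms that by (intro sum.mono_neutral_right) auto
  then show ?thesis
    by (auto simp: indep_weighting_def)
qed

locale vertex_fold =
  fixes V :: "'a set" and E :: "'a set set" and R :: "'a set" and p :: "'a \<Rightarrow> 'a"
  assumes finite_V: "finite V" and card_edges: "\<forall>e\<in>E. card e = 2"
    and R_subset: "R \<subseteq> V" and p_image: "p ` R \<subseteq> V - R"
    and dominated: "\<And>x y. x \<in> R \<Longrightarrow> y \<in> V \<Longrightarrow> {p x, y} \<in> E \<Longrightarrow> {x, y} \<in> E"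
    and image_indep: "\<And>x x'. x \<in> R \<Longrightarrow> x' \<in> R \<Longrightarrow> {p x, p x'} \<notin> E"
begin

definition fold_weights :: "('a \<Rightarrow> real) \<Rightarrow> 'a \<Rightarrow> real" where
  "fold_weights f y = (if y \<in> R then 0 else f y + sum f {x \<in> R. p x = y})"

lemma finite_R: "finite R"
  using finite_V R_subset finite_subset by blast

lemma sum_fold_weights: "sum (fold_weights f) V = sum f V"
proof -
  have "sum (fold_weights f) V = sum (fold_weights f) (V - R)"
    using finite_V by (intro sum.mono_neutral_right) (auto simp: fold_weights_def)
  also have "\<dots> = sum f (V - R) + (\<Sum>y\<in>V - R. sum f {x \<in> R. p x = y})"
    by (simp add: fold_weights_def sum.distrib)
  also have "(\<Sum>y\<in>V - R. sum f {x \<in> R. p x = y}) = sum f R"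
    using finite_R finite_V p_image by (intro sum.group) auto
  also have "sum f (V - R) + sum f R = sum f V"
    using finite_V R_subset by (metis add.commute sum.subset_diff)
  finally show ?thesis .
qed

lemma fold_weights_nonzero:
  assumes "fold_weights f y \<noteq> 0"
  shows "f y \<noteq> 0 \<or> (\<exists>x\<in>R. p x = y \<and> f x \<noteq> 0)"
proof (rule ccontr)
  assume "\<not> ?thesis"
  then have "f y = 0" "sum f {x \<in> R. p x = y} = 0"
    by (auto intro: sum.neutral)
  then show False
    using assms unfolding fold_weights_def by (simp split: if_splits)
qed

lemma indep_weighting_fold_homotopy:
  assumes f: "indep_weighting V E f" and t: "0 \<le> t" "t \<le> 1"
  shows "indep_weighting V E (\<lambda>y. t * f y + (1 - t) * fold_weights f y)"
proof -
  have f0: "0 \<le> f x" and fV: "x \<notin> V \<Longrightarrow> f x = 0" for x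
    using f by (auto simp: indep_weighting_def)
  have fE: "f u = 0 \<or> f w = 0" if "{u, w} \<in> E" for u w
    using f that by (auto simp: indep_weighting_def)
  have g0: "0 \<le> fold_weights f y" for y
    unfolding fold_weights_def using f0 by (simp add: sum_nonneg)
  have gV: "fold_weights f y = 0" if "y \<notin> V" for y
  proof -
    have "y \<notin> R" "\<forall>x\<in>{x \<in> R. p x = y}. f x = 0" using R_subset p_image that by auto
    then show ?thesis by (simp add: fold_weights_def fV[OF that] sum.neutral)
  qed
  define reached where "reached y \<longleftrightarrow> f y \<noteq> 0 \<or> (\<exists>x\<in>R. p x = y \<and> f x \<noteq> 0)" for y
  have reachedI: "reached y" if "t * f y + (1 - t) * fold_weights f y \<noteq> 0" for y
    using that fold_weights_nonzero[of f y] unfolding reached_def by force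
  have not_reached: "\<not> (reached u \<and> reached w)" if uw: "{u, w} \<in> E" for u w
  proof
    assume "reached u \<and> reached w"
    moreover have False if "x \<in> R" "f x \<noteq> 0" "f y \<noteq> 0" "{p x, y} \<in> E" for x y
      using that dominated[of x y] fE[of x y] fV[of y] by auto
    ultimately show False
      unfolding reached_def using fE[OF uw] uw image_indep by (metis insert_commute)
  qed
  show ?thesis
    unfolding indep_weighting_def
  proof (intro conjI allI impI)
    show "0 \<le> t * f x + (1 - t) * fold_weights f x" for x
      using t f0 g0 by simp
    show "t * f x + (1 - t) * fold_weights f x = 0" if "x \<notin> V" for x
      using that fV gV by simp
    show "(\<Sum>y\<in>V. t * f y + (1 - t) * fold_weights f y) = 1"
      using f sum_fold_weights[of f]
      by (simp add: sum.distrib flip: sum_distrib_left) (simp add: indep_weighting_def)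
    show "t * f u + (1 - t) * fold_weights f u = 0 \<or> t * f w + (1 - t) * fold_weights f w = 0"
      if "{u, w} \<in> E" for u w
      using not_reached[OF that] reachedI by blast
  qed
qed

lemma continuous_map_fold_weights:
  assumes "\<And>y. continuous_map Z euclideanreal (\<lambda>z. g z y)"
  shows "continuous_map Z euclideanreal (\<lambda>z. fold_weights (g z) y)"
  unfolding fold_weights_def using assms finite_R by (intro continuous_intros) auto

lemma retraction_maps_fold_weights:
  "retraction_maps (indep_realization V E) (indep_realization (V - R) E) fold_weights id"
proof -
  note in_X = in_indep_realization[OF finite_V card_edges]
    and in_Y = in_indep_realization[OF finite_V[THEN finite_Diff] card_edges]
  have "indep_weighting (V - R) E (fold_weights f)" if "indep_weighting V E f" for f
  proof -
    have "indep_weighting V E (fold_weights f)"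
      using indep_weighting_fold_homotopy[OF that, of 0] by simp
    then show ?thesis
      by (simp add: indep_weighting_Diff[OF finite_V] fold_weights_def)
  qed
  then have "continuous_map (indep_realization V E) (indep_realization (V - R) E) fold_weights"
    unfolding continuous_map_into_geometric_realization
    using continuous_map_fold_weights[of _ "\<lambda>f. f"]
    by (auto simp: in_X in_Y continuous_map_geometric_realization_eval)
  moreover have "continuous_map (indep_realization (V - R) E) (indep_realization V E) id"
    unfolding continuous_map_into_geometric_realization
    by (auto simp: in_X in_Y indep_weighting_Diff[OF finite_V] continuous_map_geometric_realization_eval)
  moreover have "fold_weights f = f" if "f \<in> topspace (indep_realization (V - R) E)" for f
    using that by (auto simp: in_Y indep_weighting_Diff[OF finite_V] fold_weights_def)
  ultimately show ?thesis
    by (simp add: retraction_maps_def)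
qed

lemma homotopic_fold_weights_id:
  "homotopic_with (\<lambda>x. True) (indep_realization V E) (indep_realization V E) fold_weights id"
  unfolding homotopic_with_def
proof (intro exI conjI allI ballI)
  let ?X = "indep_realization V E"
  let ?Z = "prod_topology (top_of_set {0..1}) ?X"
  let ?h = "\<lambda>(t::real, f). (\<lambda>y. t * f y + (1 - t) * fold_weights f y)"
  have "continuous_map ?Z euclideanreal (\<lambda>z. snd z y)" for y
    using continuous_map_compose[OF continuous_map_snd continuous_map_geometric_realization_eval]
    by (simp add: o_def)
  moreover have "continuous_map ?Z euclideanreal fst"
    using continuous_map_compose[OF continuous_map_fst continuous_map_from_subtopology[OF continuous_map_id]]
    by (simp add: o_def)
  ultimately have "continuous_map ?Z euclideanreal (\<lambda>z. ?h z y)" for y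
    by (simp add: case_prod_unfold) (intro continuous_intros continuous_map_fold_weights)
  moreover have "?h \<in> topspace ?Z \<rightarrow> topspace ?X"
    using indep_weighting_fold_homotopy by (auto simp: in_indep_realization[OF finite_V card_edges])
  ultimately show "continuous_map ?Z ?X ?h"
    unfolding continuous_map_into_geometric_realization by blast
qed auto

theorem homotopy_equivalent_Diff:
  "indep_realization V E homotopy_equivalent_space indep_realization (V - R) E"
  using homotopic_fold_weights_id retraction_maps_fold_weights
  by (rule deformation_retract_imp_homotopy_equivalent_space)

end

section \<open>Relabelling vertices\<close>

lemma indep_weighting_relabel:
  assumes t: "bij_betw t W V"
    and edges: "\<And>x y. x \<in> W \<Longrightarrow> y \<in> W \<Longrightarrow> {x, y} \<in> E' \<longleftrightarrow> {t x, t y} \<in> E"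
    and f: "indep_weighting V E f"
  shows "indep_weighting W E' (\<lambda>y. if y \<in> W then f (t y) else 0)"
proof -
  have "(\<Sum>y\<in>W. if y \<in> W then f (t y) else 0) = sum (f \<circ> t) W"
    by (intro sum.cong) auto
  also have "\<dots> = sum f V"
    using sum.reindex_bij_betw[OF t] by (simp add: o_def)
  finally show ?thesis
    using f edges by (auto simp: indep_weighting_def)
qed

lemma homeomorphic_indep_realization_relabel:
  assumes s: "bij_betw s V W" and V: "finite V"
    and E: "\<forall>e\<in>E. card e = 2" and E': "\<forall>e\<in>E'. card e = 2"
    and edges: "\<And>x y. x \<in> V \<Longrightarrow> y \<in> V \<Longrightarrow> {x, y} \<in> E \<longleftrightarrow> {s x, s y} \<in> E'"
  shows "indep_realization V E homeomorphic_space indep_realization W E'"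
proof -
  let ?t = "inv_into V s"
  have W: "finite W" using s V bij_betw_finite by blast
  have t: "bij_betw ?t W V" using s by (rule bij_betw_inv_into)
  have st: "s (?t y) = y" and tW: "?t y \<in> V" if "y \<in> W" for y
    using s t that by (auto simp: bij_betw_inv_into_right bij_betw_def)
  have ts: "?t (s x) = x" and sV: "s x \<in> W" if "x \<in> V" for x
    using s that by (auto simp: bij_betw_inv_into_left bij_betw_def)
  have edges': "{x, y} \<in> E' \<longleftrightarrow> {?t x, ?t y} \<in> E" if "x \<in> W" "y \<in> W" for x y
    using edges[OF tW tW] that st by metis
  define phi where "phi f = (\<lambda>y. if y \<in> W then f (?t y) else 0)" for f :: "'a \<Rightarrow> real"
  define psi where "psi g = (\<lambda>x. if x \<in> V then g (s x) else 0)" for g :: "'b \<Rightarrow> real"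
  let ?X = "indep_realization V E"
  let ?Y = "indep_realization W E'"
  note in_X = in_indep_realization[OF V E] and in_Y = in_indep_realization[OF W E']
  have phi: "indep_weighting W E' (phi f)" if "indep_weighting V E f" for f
    unfolding phi_def by (rule indep_weighting_relabel[OF t _ that]) (simp add: edges')
  have psi: "indep_weighting V E (psi g)" if "indep_weighting W E' g" for g
    unfolding psi_def by (rule indep_weighting_relabel[OF s _ that]) (simp add: edges)
  have "homeomorphic_maps ?X ?Y phi psi"
    unfolding homeomorphic_maps_def continuous_map_into_geometric_realization
  proof (intro conjI ballI allI)
    show "continuous_map ?X euclideanreal (\<lambda>f. phi f y)" for y
      unfolding phi_def by (auto intro: continuous_map_geometric_realization_eval)
    show "continuous_map ?Y euclideanreal (\<lambda>g. psi g x)" for x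
      unfolding psi_def by (auto intro: continuous_map_geometric_realization_eval)
    show "phi \<in> topspace ?X \<rightarrow> topspace ?Y"
      using phi by (auto simp: in_X in_Y)
    show "psi \<in> topspace ?Y \<rightarrow> topspace ?X"
      using psi by (auto simp: in_X in_Y)
    show "psi (phi f) = f" if "f \<in> topspace ?X" for f
      using that by (auto simp: in_X psi_def phi_def fun_eq_iff ts sV indep_weighting_def)
    show "phi (psi g) = g" if "g \<in> topspace ?Y" for g
      using that by (auto simp: in_Y psi_def phi_def fun_eq_iff st tW indep_weighting_def)
  qed
  then show ?thesis
    by (rule homeomorphic_maps_imp_homeomorphic_space)
qed

section \<open>Suspension by an isolated edge\<close>

locale isolated_edge =
  fixes V :: "'a set" and E :: "'a set set" and a b :: 'a
  assumes finite_V: "finite V" and a_notin: "a \<notin> V" and b_notin: "b \<notin> V" and a_neq_b: "a \<noteq> b"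
    and no_edge: "\<And>x. x \<in> V \<Longrightarrow> {x, a} \<notin> E \<and> {x, b} \<notin> E"
    and card_edges: "\<forall>e\<in>E. card e = 2"
begin

definition susp_weights :: "('a \<Rightarrow> real) \<Rightarrow> real \<Rightarrow> 'a \<Rightarrow> real" where
  "susp_weights g t v =
     (1 - \<bar>t\<bar>) * g v + (if v = a then max t 0 else 0) + (if v = b then max (- t) 0 else 0)"

definition susp_weighting :: "('a \<Rightarrow> real) susp_pt \<Rightarrow> 'a \<Rightarrow> real" where
  "susp_weighting z = (case z of
     North \<Rightarrow> susp_weights (\<lambda>_. 0) 1
   | South \<Rightarrow> susp_weights (\<lambda>_. 0) (-1)
   | Mid g t \<Rightarrow> susp_weights g t)"

lemma finite_insert_ab: "finite (insert a (insert b V))"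
  using finite_V by simp

lemma susp_weighting_susp_quotient: "susp_weighting (susp_quotient (g, t)) = susp_weights g t"
  by (auto simp: susp_weighting_def susp_quotient_def susp_weights_def fun_eq_iff)

lemma susp_weights_a: "indep_weighting V E g \<Longrightarrow> susp_weights g t a = max t 0"
  and susp_weights_b: "indep_weighting V E g \<Longrightarrow> susp_weights g t b = max (- t) 0"
  and susp_weights_V: "v \<in> V \<Longrightarrow> susp_weights g t v = (1 - \<bar>t\<bar>) * g v"
  and susp_weights_outside:
    "indep_weighting V E g \<Longrightarrow> v \<notin> insert a (insert b V) \<Longrightarrow> susp_weights g t v = 0"
  using a_notin b_notin a_neq_b by (auto simp: susp_weights_def indep_weighting_def)

lemma indep_weighting_susp_weights:
  assumes g: "indep_weighting V E g" and t: "-1 \<le> t" "t \<le> 1"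
  shows "indep_weighting (insert a (insert b V)) E (susp_weights g t)"
  unfolding indep_weighting_def
proof (intro conjI allI impI)
  show "0 \<le> susp_weights g t v" for v
    using g t by (auto simp: susp_weights_def indep_weighting_def)
  show "susp_weights g t v = 0" if "v \<notin> insert a (insert b V)" for v
    using susp_weights_outside[OF g that] .
  have "sum (susp_weights g t) V = (1 - \<bar>t\<bar>) * sum g V"
    by (simp add: susp_weights_V sum_distrib_left)
  then show "sum (susp_weights g t) (insert a (insert b V)) = 1"
    using g finite_V a_notin b_notin a_neq_b
    by (simp add: susp_weights_a susp_weights_b indep_weighting_def max_def)
  have support: "v = a \<and> t > 0 \<or> v = b \<and> t < 0 \<or> v \<in> V \<and> g v \<noteq> 0"
    if "susp_weights g t v \<noteq> 0" for v
    using that g a_notin b_notin a_neq_b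
    by (auto simp: susp_weights_def indep_weighting_def max_def split: if_splits)
  show "susp_weights g t u = 0 \<or> susp_weights g t w = 0" if uw: "{u, w} \<in> E" for u w
  proof (rule ccontr)
    assume "\<not> ?thesis"
    then have "u = a \<and> t > 0 \<or> u = b \<and> t < 0 \<or> u \<in> V \<and> g u \<noteq> 0"
      "w = a \<and> t > 0 \<or> w = b \<and> t < 0 \<or> w \<in> V \<and> g w \<noteq> 0"
      using support by auto
    moreover have "u \<noteq> w" using card_edges uw by fastforce
    moreover have "g u = 0 \<or> g w = 0" using g uw by (auto simp: indep_weighting_def)
    ultimately show False
      using uw no_edge[of u] no_edge[of w] by (auto simp: insert_commute)
  qed
qed

lemma susp_weights_eqD:
  assumes g1: "indep_weighting V E g1" and g2: "indep_weighting V E g2"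
    and eq: "susp_weights g1 t1 = susp_weights g2 t2"
  shows "t1 = t2" and "\<bar>t1\<bar> \<noteq> 1 \<Longrightarrow> g1 = g2"
proof -
  have "max t1 0 = max t2 0" "max (- t1) 0 = max (- t2) 0"
    using eq susp_weights_a[OF g1] susp_weights_a[OF g2] susp_weights_b[OF g1] susp_weights_b[OF g2]
    by metis+
  then show t: "t1 = t2" by (auto simp: max_def split: if_splits)
  assume "\<bar>t1\<bar> \<noteq> 1"
  have "g1 v = g2 v" if "v \<in> V" for v
    using fun_cong[OF eq, of v] \<open>\<bar>t1\<bar> \<noteq> 1\<close> that by (simp add: susp_weights_V t)
  moreover have "g1 v = g2 v" if "v \<notin> V" for v
    using g1 g2 that by (simp add: indep_weighting_def)
  ultimately show "g1 = g2"
    by blast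
qed

lemma susp_weights_surj:
  assumes f: "indep_weighting (insert a (insert b V)) E f"
    and edge_ab: "{a, b} \<in> E" and nonempty: "V \<noteq> {}"
  obtains g t where "indep_weighting V E g" "-1 \<le> t" "t \<le> 1" "f = susp_weights g t"
proof -
  define t where "t = f a - f b"
  have f0: "0 \<le> f v" for v using f by (simp add: indep_weighting_def)
  have "f a = 0 \<or> f b = 0" using f edge_ab by (simp add: indep_weighting_def)
  then have fa: "f a = max t 0" and fb: "f b = max (- t) 0" and abs_t: "\<bar>t\<bar> = f a + f b"
    using f0[of a] f0[of b] by (auto simp: t_def max_def)
  have sum_V: "sum f V = 1 - \<bar>t\<bar>"
    using f finite_V a_notin b_notin a_neq_b abs_t by (simp add: indep_weighting_def)
  then have t: "-1 \<le> t" "t \<le> 1"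
    using sum_nonneg[of V f] f0 by auto
  obtain g where g: "indep_weighting V E g" and g_V: "\<And>v. v \<in> V \<Longrightarrow> f v = (1 - \<bar>t\<bar>) * g v"
  proof (cases "\<bar>t\<bar> = 1")
    case True
    obtain x0 where x0: "x0 \<in> V" using nonempty by blast
    have "indep_weighting V E (\<lambda>v. if v = x0 then 1 else 0)"
      using x0 finite_V card_edges by (fastforce simp: indep_weighting_def)
    moreover have "f v = 0" if "v \<in> V" for v
      using sum_V True finite_V f0 that by (simp add: sum_nonneg_eq_0_iff)
    ultimately show ?thesis
      using that True by auto
  next
    case False
    then have pos: "1 - \<bar>t\<bar> > 0" using t by auto
    define g where "g v = (if v \<in> V then f v / (1 - \<bar>t\<bar>) else 0)" for v
    have "sum g V = 1"
      using sum_V pos by (simp add: g_def sum_divide_distrib[symmetric])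
    then have "indep_weighting V E g"
      using f f0 pos by (auto simp: indep_weighting_def g_def)
    then show ?thesis
      using that pos by (simp add: g_def)
  qed
  have "f v = susp_weights g t v" for v
    using fa fb g_V f susp_weights_a[OF g] susp_weights_b[OF g] susp_weights_V
      susp_weights_outside[OF g] by (cases "v \<in> insert a (insert b V)") (auto simp: indep_weighting_def)
  then show ?thesis
    using that g t by blast
qed

lemma continuous_map_susp_weighting:
  "continuous_map (suspension (indep_realization V E)) (indep_realization (insert a (insert b V)) E)
     susp_weighting"
  unfolding suspension_eq_quotient
proof (rule continuous_map_from_quotient_topology)
  let ?P = "prod_topology (indep_realization V E) (top_of_set {-1..1})"
  have "continuous_map ?P euclideanreal snd"
    using continuous_map_compose[OF continuous_map_snd continuous_map_from_subtopology[OF continuous_map_id]]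
    by (simp add: o_def)
  moreover have "continuous_map ?P euclideanreal (\<lambda>z. fst z v)" for v
    using continuous_map_compose[OF continuous_map_fst continuous_map_geometric_realization_eval]
    by (simp add: o_def)
  ultimately have "continuous_map ?P euclideanreal (\<lambda>z. susp_weights (fst z) (snd z) v)" for v
    unfolding susp_weights_def by (intro continuous_intros)
  moreover have "(\<lambda>z. susp_weights (fst z) (snd z)) \<in> topspace ?P \<rightarrow>
      topspace (indep_realization (insert a (insert b V)) E)"
    using indep_weighting_susp_weights
    by (auto simp: in_indep_realization[OF finite_V card_edges]
        in_indep_realization[OF finite_insert_ab card_edges])
  moreover have "(\<lambda>z. susp_weighting (susp_quotient z)) = (\<lambda>z. susp_weights (fst z) (snd z))"
    by (rule ext) (metis prod.collapse susp_weighting_susp_quotient)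
  ultimately show "continuous_map ?P (indep_realization (insert a (insert b V)) E)
      (\<lambda>z. susp_weighting (susp_quotient z))"
    by (simp add: continuous_map_into_geometric_realization)
qed

lemma inj_on_susp_weighting: "inj_on susp_weighting (topspace (suspension (indep_realization V E)))"
proof (rule inj_onI)
  fix z1 z2
  assume "z1 \<in> topspace (suspension (indep_realization V E))"
    "z2 \<in> topspace (suspension (indep_realization V E))"
    and eq: "susp_weighting z1 = susp_weighting z2"
  then obtain g1 t1 g2 t2 where g: "indep_weighting V E g1" "indep_weighting V E g2"
    and z: "z1 = susp_quotient (g1, t1)" "z2 = susp_quotient (g2, t2)"
    by (auto simp: topspace_suspension in_indep_realization[OF finite_V card_edges])
  then have "susp_weights g1 t1 = susp_weights g2 t2"
    using eq by (simp add: susp_weighting_susp_quotient)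
  then show "z1 = z2"
    using susp_weights_eqD[OF g] z by (cases "\<bar>t1\<bar> = 1") (auto simp: susp_quotient_def)
qed

lemma susp_weighting_image:
  assumes edge_ab: "{a, b} \<in> E" and nonempty: "V \<noteq> {}"
  shows "susp_weighting ` topspace (suspension (indep_realization V E)) =
    topspace (indep_realization (insert a (insert b V)) E)"
proof
  show "susp_weighting ` topspace (suspension (indep_realization V E)) \<subseteq>
      topspace (indep_realization (insert a (insert b V)) E)"
    using continuous_map_susp_weighting by (auto simp: continuous_map_def)
  show "topspace (indep_realization (insert a (insert b V)) E) \<subseteq>
      susp_weighting ` topspace (suspension (indep_realization V E))"
  proof
    fix f assume "f \<in> topspace (indep_realization (insert a (insert b V)) E)"
    then obtain g t where "indep_weighting V E g" "-1 \<le> t" "t \<le> 1" "f = susp_weights g t"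
      using susp_weights_surj[OF _ edge_ab nonempty]
      by (auto simp: in_indep_realization[OF finite_insert_ab card_edges])
    then have "susp_quotient (g, t) \<in> topspace (suspension (indep_realization V E))"
      "f = susp_weighting (susp_quotient (g, t))"
      by (auto simp: topspace_suspension in_indep_realization[OF finite_V card_edges] susp_weighting_susp_quotient)
    then show "f \<in> susp_weighting ` topspace (suspension (indep_realization V E))"
      by blast
  qed
qed

theorem homeomorphic_suspension:
  assumes edge_ab: "{a, b} \<in> E" and nonempty: "V \<noteq> {}"
  shows "indep_realization (insert a (insert b V)) E homeomorphic_space suspension (indep_realization V E)"
proof -
  have "closed_map (suspension (indep_realization V E)) (indep_realization (insert a (insert b V)) E)
      susp_weighting"
    using continuous_map_susp_weighting
      compact_space_suspension[OF compact_space_indep_realization[OF finite_V card_edges]]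
      Hausdorff_space_geometric_realization by (rule continuous_imp_closed_map)
  then have "homeomorphic_map (suspension (indep_realization V E))
      (indep_realization (insert a (insert b V)) E) susp_weighting"
    using continuous_map_susp_weighting susp_weighting_image[OF edge_ab nonempty] inj_on_susp_weighting
    by (intro bijective_closed_imp_homeomorphic_map)
  then show ?thesis
    using homeomorphic_map_imp_homeomorphic_space homeomorphic_space_sym by blast
qed

end

section \<open>Perfect matchings and spheres\<close>

lemma in_topspace_nsphere_iff:
  "y \<in> topspace (nsphere m) \<longleftrightarrow> (\<Sum>i\<le>m. (y i)\<^sup>2) = 1 \<and> (\<forall>i>m. y i = 0)"
  by (simp add: nsphere)

locale perfect_matching =
  fixes m :: nat and a b :: "nat \<Rightarrow> 'a" and V :: "'a set" and E :: "'a set set"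
  assumes inj_a: "inj_on a {..m}" and inj_b: "inj_on b {..m}"
    and a_neq_b: "\<And>i j. i \<le> m \<Longrightarrow> j \<le> m \<Longrightarrow> a i \<noteq> b j"
    and vertices: "V = a ` {..m} \<union> b ` {..m}"
    and edges: "\<And>x y. x \<in> V \<Longrightarrow> y \<in> V \<Longrightarrow> {x, y} \<in> E \<longleftrightarrow> (\<exists>i\<le>m. {x, y} = {a i, b i})"
    and card_edges: "\<forall>e\<in>E. card e = 2"
begin

definition coord :: "('a \<Rightarrow> real) \<Rightarrow> nat \<Rightarrow> real" where
  "coord f i = f (a i) - f (b i)"

definition to_sphere :: "('a \<Rightarrow> real) \<Rightarrow> nat \<Rightarrow> real" where
  "to_sphere f i = (if i \<le> m then coord f i / sqrt (\<Sum>j\<le>m. (coord f j)\<^sup>2) else 0)"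

definition from_sphere :: "(nat \<Rightarrow> real) \<Rightarrow> 'a \<Rightarrow> real" where
  "from_sphere y v =
     (if v \<in> a ` {..m} then max (y (inv_into {..m} a v)) 0
      else if v \<in> b ` {..m} then max (- y (inv_into {..m} b v)) 0 else 0) / (\<Sum>i\<le>m. \<bar>y i\<bar>)"

lemma finite_V: "finite V"
  by (simp add: vertices)

lemma sum_V: "sum g V = (\<Sum>i\<le>m. g (a i) + g (b i))"
proof -
  have "sum g V = sum g (a ` {..m}) + sum g (b ` {..m})"
    unfolding vertices using a_neq_b by (intro sum.union_disjoint) auto
  then show ?thesis
    by (simp add: sum.reindex[OF inj_a] sum.reindex[OF inj_b] sum.distrib)
qed

lemma abs_coord:
  assumes f: "indep_weighting V E f" and i: "i \<le> m"
  shows "\<bar>coord f i\<bar> = f (a i) + f (b i)"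
proof -
  have "{a i, b i} \<in> E" using edges i by (auto simp: vertices)
  then have "f (a i) = 0 \<or> f (b i) = 0" using f by (simp add: indep_weighting_def)
  then show ?thesis using f by (auto simp: coord_def indep_weighting_def)
qed

lemma sum_abs_coord: "indep_weighting V E f \<Longrightarrow> (\<Sum>i\<le>m. \<bar>coord f i\<bar>) = 1"
  using sum_V[of f] by (simp add: abs_coord indep_weighting_def)

lemma coord_norm_pos:
  assumes "indep_weighting V E f"
  shows "sqrt (\<Sum>j\<le>m. (coord f j)\<^sup>2) > 0"
proof -
  have "\<exists>j\<le>m. coord f j \<noteq> 0"
  proof (rule ccontr)
    assume "\<not> ?thesis"
    then have "(\<Sum>i\<le>m. \<bar>coord f i\<bar>) = 0" by simp
    with sum_abs_coord[OF assms] show False by simp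
  qed
  then obtain j where "j \<le> m" "coord f j \<noteq> 0" by blast
  then have "(\<Sum>j\<le>m. (coord f j)\<^sup>2) > 0"
    by (intro sum_pos2[of _ j]) auto
  then show ?thesis by simp
qed

lemma sphere_l1_pos:
  assumes "y \<in> topspace (nsphere m)"
  shows "(\<Sum>i\<le>m. \<bar>y i\<bar>) > 0"
proof -
  have "(\<Sum>i\<le>m. (y i)\<^sup>2) = 1"
    using assms by (simp add: in_topspace_nsphere_iff)
  have "\<exists>i\<le>m. y i \<noteq> 0"
  proof (rule ccontr)
    assume "\<not> ?thesis"
    then have "(\<Sum>i\<le>m. (y i)\<^sup>2) = 0" by simp
    with \<open>(\<Sum>i\<le>m. (y i)\<^sup>2) = 1\<close> show False by simp
  qed
  then obtain i where "i \<le> m" "y i \<noteq> 0" by blast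
  then show ?thesis
    by (intro sum_pos2[of _ i]) auto
qed

lemma from_sphere_a: "j \<le> m \<Longrightarrow> from_sphere y (a j) = max (y j) 0 / (\<Sum>i\<le>m. \<bar>y i\<bar>)"
  using inj_a by (simp add: from_sphere_def)

lemma from_sphere_b:
  assumes "j \<le> m"
  shows "from_sphere y (b j) = max (- y j) 0 / (\<Sum>i\<le>m. \<bar>y i\<bar>)"
proof -
  have "b j \<notin> a ` {..m}" using a_neq_b[OF _ assms] by (metis imageE atMost_iff)
  then show ?thesis using inj_b assms by (simp add: from_sphere_def)
qed

lemma from_sphere_outside: "v \<notin> V \<Longrightarrow> from_sphere y v = 0"
  by (simp add: from_sphere_def vertices)

lemma to_sphere_in_nsphere:
  assumes f: "indep_weighting V E f"
  shows "to_sphere f \<in> topspace (nsphere m)"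
proof -
  have "(\<Sum>i\<le>m. (to_sphere f i)\<^sup>2) = (\<Sum>i\<le>m. (coord f i)\<^sup>2) / (sqrt (\<Sum>j\<le>m. (coord f j)\<^sup>2))\<^sup>2"
    by (simp add: to_sphere_def power_divide sum_divide_distrib)
  also have "\<dots> = 1"
    using coord_norm_pos[OF f] by (simp add: sum_nonneg)
  finally show ?thesis
    by (simp add: in_topspace_nsphere_iff to_sphere_def)
qed

lemma indep_weighting_from_sphere:
  assumes y: "y \<in> topspace (nsphere m)"
  shows "indep_weighting V E (from_sphere y)"
  unfolding indep_weighting_def
proof (intro conjI allI impI)
  have l1: "(\<Sum>i\<le>m. \<bar>y i\<bar>) > 0" by (rule sphere_l1_pos[OF y])
  show "0 \<le> from_sphere y v" for v
    using l1 by (simp add: from_sphere_def)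
  show "from_sphere y v = 0" if "v \<notin> V" for v
    using that by (rule from_sphere_outside)
  have "(\<Sum>i\<le>m. max (y i) 0 + max (- y i) 0) = (\<Sum>i\<le>m. \<bar>y i\<bar>)"
    by (intro sum.cong) auto
  then show "sum (from_sphere y) V = 1"
    using l1 by (simp add: sum_V from_sphere_a from_sphere_b add_divide_distrib[symmetric]
        sum_divide_distrib[symmetric])
  show "from_sphere y u = 0 \<or> from_sphere y w = 0" if uw: "{u, w} \<in> E" for u w
  proof (cases "u \<in> V \<and> w \<in> V")
    case True
    then obtain i where "i \<le> m" "{u, w} = {a i, b i}" using edges uw by blast
    then show ?thesis
      by (auto simp: doubleton_eq_iff from_sphere_a from_sphere_b max_def split: if_splits)
  qed (auto simp: from_sphere_outside)
qed

lemma from_sphere_to_sphere: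
  assumes f: "indep_weighting V E f"
  shows "from_sphere (to_sphere f) = f"
proof
  fix v
  let ?n = "sqrt (\<Sum>j\<le>m. (coord f j)\<^sup>2)"
  have n: "?n > 0" by (rule coord_norm_pos[OF f])
  have "(\<Sum>i\<le>m. \<bar>to_sphere f i\<bar>) = (\<Sum>i\<le>m. \<bar>coord f i\<bar>) / ?n"
    using n by (simp add: to_sphere_def sum_divide_distrib)
  then have l1: "(\<Sum>i\<le>m. \<bar>to_sphere f i\<bar>) = 1 / ?n"
    by (simp add: sum_abs_coord[OF f])
  have ab: "f (a i) = max (coord f i) 0" "f (b i) = max (- coord f i) 0" if "i \<le> m" for i
    using abs_coord[OF f that] f by (auto simp: coord_def max_def indep_weighting_def)
  have scale: "max (c / ?n) 0 / (1 / ?n) = max c 0" for c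
    using n by (simp add: max_def field_simps)
  consider i where "i \<le> m" "v = a i" | i where "i \<le> m" "v = b i" | "v \<notin> V"
    using vertices by auto
  then show "from_sphere (to_sphere f) v = f v"
  proof cases
    case 1
    then have "from_sphere (to_sphere f) v = max (to_sphere f i) 0 / (1 / ?n)"
      by (simp add: from_sphere_a l1)
    then show ?thesis
      using 1 scale[of "coord f i"] by (simp add: ab to_sphere_def)
  next
    case 2
    then have "from_sphere (to_sphere f) v = max (- to_sphere f i) 0 / (1 / ?n)"
      by (simp add: from_sphere_b l1)
    then show ?thesis
      using 2 scale[of "- coord f i"] by (simp add: ab to_sphere_def)
  next
    case 3
    then show ?thesis
      using f by (simp add: from_sphere_outside indep_weighting_def)
  qed
qed

lemma to_sphere_from_sphere:
  assumes y: "y \<in> topspace (nsphere m)"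
  shows "to_sphere (from_sphere y) = y"
proof
  fix i
  let ?l = "\<Sum>i\<le>m. \<bar>y i\<bar>"
  have l: "?l > 0" by (rule sphere_l1_pos[OF y])
  have coord: "coord (from_sphere y) j = y j / ?l" if "j \<le> m" for j
    using that by (simp add: coord_def from_sphere_a from_sphere_b diff_divide_distrib[symmetric] max_def)
  have "sqrt (\<Sum>j\<le>m. (coord (from_sphere y) j)\<^sup>2) = sqrt ((\<Sum>j\<le>m. (y j)\<^sup>2) / ?l\<^sup>2)"
    by (simp add: coord power_divide sum_divide_distrib)
  also have "\<dots> = 1 / ?l"
    using y l by (simp add: in_topspace_nsphere_iff real_sqrt_divide)
  finally show "to_sphere (from_sphere y) i = y i"
    using y l by (auto simp: to_sphere_def coord in_topspace_nsphere_iff)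
qed

lemma homeomorphic_nsphere: "indep_realization V E homeomorphic_space nsphere m"
proof -
  let ?X = "indep_realization V E"
  note in_X = in_indep_realization[OF finite_V card_edges]
  have "continuous_map ?X euclideanreal (\<lambda>f. to_sphere f i)" for i
  proof (cases "i \<le> m")
    case True
    have "sqrt (\<Sum>j\<le>m. (f (a j) - f (b j))\<^sup>2) \<noteq> 0" if "f \<in> topspace ?X" for f
      using coord_norm_pos that by (force simp: in_X coord_def)
    then show ?thesis
      using True unfolding to_sphere_def coord_def
      by (auto intro!: continuous_intros)
  qed (simp add: to_sphere_def)
  then have "continuous_map ?X (nsphere m) to_sphere"
    unfolding nsphere continuous_map_in_subtopology continuous_map_componentwise_UNIV
    using to_sphere_in_nsphere by (auto simp: in_X nsphere)
  moreover have "continuous_map (nsphere m) ?X from_sphere"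
    unfolding continuous_map_into_geometric_realization
  proof (intro conjI allI)
    have "(\<Sum>i\<le>m. \<bar>y i\<bar>) \<noteq> 0" if "y \<in> topspace (nsphere m)" for y
      using sphere_l1_pos[OF that] by simp
    then show "continuous_map (nsphere m) euclideanreal (\<lambda>y. from_sphere y v)" for v
      unfolding from_sphere_def by (intro continuous_intros continuous_map_nsphere_projection) auto
    show "from_sphere \<in> topspace (nsphere m) \<rightarrow> topspace ?X"
      using indep_weighting_from_sphere by (auto simp: in_X)
  qed
  ultimately have "homeomorphic_maps ?X (nsphere m) to_sphere from_sphere"
    unfolding homeomorphic_maps_def
    by (auto simp: in_X from_sphere_to_sphere to_sphere_from_sphere)
  then show ?thesis
    by (rule homeomorphic_maps_imp_homeomorphic_space)
qed

end

section \<open>The graphs H and ring-H\<close>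

fun H_adj :: "nat \<Rightarrow> nat \<Rightarrow> vert \<Rightarrow> vert \<Rightarrow> bool" where
  "H_adj k n (U i a) (U i' b) \<longleftrightarrow>
     1 \<le> i \<and> i' = i + 1 \<and> i + 1 \<le> k \<and> 1 \<le> a \<and> a \<le> n \<and> 1 \<le> b \<and> b \<le> n \<and> a \<noteq> b"
| "H_adj k n (U i a) V1 \<longleftrightarrow> i = 1 \<and> 2 \<le> a \<and> a \<le> n"
| "H_adj k n (U i a) V2 \<longleftrightarrow> i = k \<and> 1 \<le> a \<and> a \<le> n \<and> a \<noteq> 2"
| "H_adj k n _ _ \<longleftrightarrow> False"

fun pendant_adj :: "vert \<Rightarrow> vert \<Rightarrow> bool" where
  "pendant_adj V1 W1 \<longleftrightarrow> True"
| "pendant_adj V2 W2 \<longleftrightarrow> True"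
| "pendant_adj _ _ \<longleftrightarrow> False"

lemma H_adj_simps [simp]:
  "\<not> H_adj k n x W1" "\<not> H_adj k n x W2" "\<not> H_adj k n W1 x" "\<not> H_adj k n W2 x"
  "\<not> H_adj k n V1 x" "\<not> H_adj k n V2 x"
  by (cases x; simp)+

lemma pendant_adj_simps [simp]:
  "pendant_adj x W1 \<longleftrightarrow> x = V1" "pendant_adj x W2 \<longleftrightarrow> x = V2"
  "\<not> pendant_adj W1 x" "\<not> pendant_adj W2 x" "\<not> pendant_adj (U i j) x" "\<not> pendant_adj x (U i j)"
  "\<not> pendant_adj x V1" "\<not> pendant_adj x V2"
  "pendant_adj V1 x \<longleftrightarrow> x = W1" "pendant_adj V2 x \<longleftrightarrow> x = W2"
  by (cases x; simp)+

lemma H_edges_iff: "{x, y} \<in> H_edges k n \<longleftrightarrow> H_adj k n x y \<or> H_adj k n y x"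
proof
  assume "{x, y} \<in> H_edges k n"
  then show "H_adj k n x y \<or> H_adj k n y x"
    unfolding H_edges_def by (auto simp: doubleton_eq_iff)
next
  assume "H_adj k n x y \<or> H_adj k n y x"
  then show "{x, y} \<in> H_edges k n"
    by (cases x; cases y) (auto simp: H_edges_def doubleton_eq_iff insert_commute)
qed

lemma Hr_edges_iff:
  "{x, y} \<in> Hr_edges k n \<longleftrightarrow> H_adj k n x y \<or> H_adj k n y x \<or> pendant_adj x y \<or> pendant_adj y x"
proof -
  have "{x, y} \<in> {{V1, W1}, {V2, W2}} \<longleftrightarrow> pendant_adj x y \<or> pendant_adj y x"
    by (cases x; cases y) (auto simp: doubleton_eq_iff)
  then show ?thesis
    unfolding Hr_edges_def using H_edges_iff by auto
qed

lemma card_H_edges: "\<forall>e\<in>H_edges k n. card e = 2"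
  by (auto simp: H_edges_def)

lemma card_Hr_edges: "\<forall>e\<in>Hr_edges k n. card e = 2"
  using card_H_edges by (auto simp: Hr_edges_def)

lemma singleton_notin_Hr_edges [simp]: "{x} \<notin> Hr_edges k n"
  using card_Hr_edges by fastforce

lemma U_in_H_verts [simp]: "U i j \<in> H_verts k n \<longleftrightarrow> 1 \<le> i \<and> i \<le> k \<and> 1 \<le> j \<and> j \<le> n"
  and V_in_H_verts [simp]: "V1 \<in> H_verts k n" "V2 \<in> H_verts k n"
  and W_notin_H_verts [simp]: "W1 \<notin> H_verts k n" "W2 \<notin> H_verts k n"
  by (auto simp: H_verts_def)

lemma in_Hr_verts [simp]: "x \<in> Hr_verts k n \<longleftrightarrow> x \<in> H_verts k n \<or> x = W1 \<or> x = W2"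
  by (auto simp: Hr_verts_def)

lemma finite_H_verts: "finite (H_verts k n)"
proof -
  have "{U i j | i j. 1 \<le> i \<and> i \<le> k \<and> 1 \<le> j \<and> j \<le> n} = (\<lambda>(i, j). U i j) ` ({1..k} \<times> {1..n})"
    by auto
  then show ?thesis
    by (simp add: H_verts_def)
qed

lemma finite_Hr_verts: "finite (Hr_verts k n)"
  using finite_H_verts by (simp add: Hr_verts_def)

definition end_neighbours :: "nat \<Rightarrow> nat \<Rightarrow> vert set" where
  "end_neighbours k n = {U 1 j | j. 2 \<le> j \<and> j \<le> n} \<union> {U k j | j. 1 \<le> j \<and> j \<le> n \<and> j \<noteq> 2}"

definition end_fold :: "vert \<Rightarrow> vert" where
  "end_fold x = (case x of U i _ \<Rightarrow> if i = 1 then W1 else W2 | _ \<Rightarrow> W1)"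

definition core_verts :: "nat \<Rightarrow> nat \<Rightarrow> vert set" where
  "core_verts k n = {U 1 1, U k 2} \<union> {U i j | i j. 2 \<le> i \<and> i + 1 \<le> k \<and> 1 \<le> j \<and> j \<le> n}"

lemma in_end_neighbours [simp]:
  "U i j \<in> end_neighbours k n \<longleftrightarrow> i = 1 \<and> 2 \<le> j \<and> j \<le> n \<or> i = k \<and> 1 \<le> j \<and> j \<le> n \<and> j \<noteq> 2"
  "V1 \<notin> end_neighbours k n" "V2 \<notin> end_neighbours k n"
  "W1 \<notin> end_neighbours k n" "W2 \<notin> end_neighbours k n"
  by (auto simp: end_neighbours_def)

lemma in_core_verts [simp]:
  "U i j \<in> core_verts k n \<longleftrightarrow> i = 1 \<and> j = 1 \<or> i = k \<and> j = 2 \<or> 2 \<le> i \<and> i + 1 \<le> k \<and> 1 \<le> j \<and> j \<le> n"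
  "V1 \<notin> core_verts k n" "V2 \<notin> core_verts k n" "W1 \<notin> core_verts k n" "W2 \<notin> core_verts k n"
  by (auto simp: core_verts_def)

lemma finite_core_verts: "finite (core_verts k n)"
proof -
  have "core_verts k n \<subseteq> insert (U 1 1) (insert (U k 2) (H_verts k n))"
    by (auto simp: core_verts_def)
  then show ?thesis
    using finite_H_verts finite_subset by blast
qed

lemma Hr_verts_Diff_end_neighbours:
  assumes "k \<ge> 2" and "n \<ge> 2"
  shows "Hr_verts k n - end_neighbours k n = insert V2 (insert W2 (insert V1 (insert W1 (core_verts k n))))"
proof (rule set_eqI)
  fix x show "x \<in> Hr_verts k n - end_neighbours k n \<longleftrightarrow>
      x \<in> insert V2 (insert W2 (insert V1 (insert W1 (core_verts k n))))"
    using assms by (cases x) auto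
qed

lemma homotopy_equivalent_Hr_core:
  assumes k: "k \<ge> 2" and n: "n \<ge> 2"
  shows "indep_realization (Hr_verts k n) (Hr_edges k n) homotopy_equivalent_space
    indep_realization (insert V2 (insert W2 (insert V1 (insert W1 (core_verts k n))))) (Hr_edges k n)"
  unfolding Hr_verts_Diff_end_neighbours[OF k n, symmetric]
proof (rule vertex_fold.homotopy_equivalent_Diff, unfold_locales)
  show "finite (Hr_verts k n)" "\<forall>e\<in>Hr_edges k n. card e = 2"
    by (rule finite_Hr_verts card_Hr_edges)+
  show "end_neighbours k n \<subseteq> Hr_verts k n"
    using k by (auto simp: end_neighbours_def)
  show "end_fold ` end_neighbours k n \<subseteq> Hr_verts k n - end_neighbours k n"
    by (auto simp: end_neighbours_def end_fold_def split: if_splits)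
  show "{x, y} \<in> Hr_edges k n"
    if "x \<in> end_neighbours k n" "y \<in> Hr_verts k n" "{end_fold x, y} \<in> Hr_edges k n" for x y
    using that k by (auto simp: end_neighbours_def end_fold_def Hr_edges_iff)
  show "{end_fold x, end_fold x'} \<notin> Hr_edges k n"
    if "x \<in> end_neighbours k n" "x' \<in> end_neighbours k n" for x x'
    using that by (auto simp: end_neighbours_def end_fold_def Hr_edges_iff split: if_splits)
qed

lemma homeomorphic_core_2:
  assumes n: "n \<ge> 2"
  shows "indep_realization (insert V2 (insert W2 (insert V1 (insert W1 (core_verts 2 n))))) (Hr_edges 2 n)
    homeomorphic_space nsphere 2"
proof -
  let ?a = "(!) [U 1 1, V1, V2]" and ?b = "(!) [U 2 2, W1, W2]"
  have le_2: "i \<le> 2 \<longleftrightarrow> i = 0 \<or> i = 1 \<or> i = (2::nat)" for i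
    by auto
  have atMost_2: "{..2::nat} = {0, 1, 2}"
    by auto
  have ex_le_2: "(\<exists>i\<le>2. P i) \<longleftrightarrow> P 0 \<or> P 1 \<or> P (2::nat)" for P
    by (auto simp: le_2)
  have core: "core_verts 2 n = {U 1 1, U 2 2}"
    using n by (auto simp: core_verts_def)
  interpret perfect_matching 2 ?a ?b "insert V2 (insert W2 (insert V1 (insert W1 (core_verts 2 n))))"
    "Hr_edges 2 n"
  proof
    show "inj_on ?a {..2}" "inj_on ?b {..2}"
      by (auto intro!: inj_on_nth)
    show "?a i \<noteq> ?b j" if "i \<le> 2" "j \<le> 2" for i j
      using that by (auto simp: le_2)
    show "insert V2 (insert W2 (insert V1 (insert W1 (core_verts 2 n)))) = ?a ` {..2} \<union> ?b ` {..2}"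
      by (auto simp: atMost_2 core)
    show "{x, y} \<in> Hr_edges 2 n \<longleftrightarrow> (\<exists>i\<le>2. {x, y} = {?a i, ?b i})"
      if "x \<in> insert V2 (insert W2 (insert V1 (insert W1 (core_verts 2 n))))"
        "y \<in> insert V2 (insert W2 (insert V1 (insert W1 (core_verts 2 n))))" for x y
      using that n unfolding core
      by (elim insertE singletonE emptyE; simp add: ex_le_2 Hr_edges_iff doubleton_eq_iff)
  qed (rule card_Hr_edges)
  show ?thesis by (rule homeomorphic_nsphere)
qed

lemma homeomorphic_matching_3:
  assumes n: "n \<ge> 2"
  shows "indep_realization {V2, W2, V1, W1, U 1 1, U 2 1, U 2 2, U 3 2} (Hr_edges 3 n)
    homeomorphic_space nsphere 3"
proof -
  let ?a = "(!) [U 1 1, U 2 1, V1, V2]" and ?b = "(!) [U 2 2, U 3 2, W1, W2]"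
  have le_3: "i \<le> 3 \<longleftrightarrow> i = 0 \<or> i = 1 \<or> i = 2 \<or> i = (3::nat)" for i
    by auto
  have atMost_3: "{..3::nat} = {0, 1, 2, 3}"
    by auto
  have ex_le_3: "(\<exists>i\<le>3. P i) \<longleftrightarrow> P 0 \<or> P 1 \<or> P 2 \<or> P (3::nat)" for P
    by (auto simp: le_3)
  interpret perfect_matching 3 ?a ?b "{V2, W2, V1, W1, U 1 1, U 2 1, U 2 2, U 3 2}" "Hr_edges 3 n"
  proof
    show "inj_on ?a {..3}" "inj_on ?b {..3}"
      by (auto intro!: inj_on_nth)
    show "?a i \<noteq> ?b j" if "i \<le> 3" "j \<le> 3" for i j
      using that by (auto simp: le_3)
    show "{V2, W2, V1, W1, U 1 1, U 2 1, U 2 2, U 3 2} = ?a ` {..3} \<union> ?b ` {..3}"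
      by (auto simp: atMost_3)
    show "{x, y} \<in> Hr_edges 3 n \<longleftrightarrow> (\<exists>i\<le>3. {x, y} = {?a i, ?b i})"
      if "x \<in> {V2, W2, V1, W1, U 1 1, U 2 1, U 2 2, U 3 2}"
        "y \<in> {V2, W2, V1, W1, U 1 1, U 2 1, U 2 2, U 3 2}" for x y
      using that n
      by (elim insertE singletonE emptyE; simp add: ex_le_3 Hr_edges_iff doubleton_eq_iff)
  qed (rule card_Hr_edges)
  show ?thesis by (rule homeomorphic_nsphere)
qed

lemma homotopy_equivalent_core_3:
  assumes n: "n \<ge> 2"
  shows "indep_realization (insert V2 (insert W2 (insert V1 (insert W1 (core_verts 3 n))))) (Hr_edges 3 n)
    homotopy_equivalent_space nsphere 3"
proof -
  define V where "V = insert V2 (insert W2 (insert V1 (insert W1 (core_verts 3 n))))"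
  define R where "R = {U 2 j | j. 3 \<le> j \<and> j \<le> n}"
  have "indep_realization V (Hr_edges 3 n) homotopy_equivalent_space indep_realization (V - R) (Hr_edges 3 n)"
  proof (rule vertex_fold.homotopy_equivalent_Diff[where p = "\<lambda>_. U 2 1"], unfold_locales)
    show "finite V"
      using finite_core_verts by (simp add: V_def)
    show "\<forall>e\<in>Hr_edges 3 n. card e = 2"
      by (rule card_Hr_edges)
    show "R \<subseteq> V" "(\<lambda>_. U 2 1) ` R \<subseteq> V - R"
      using n by (auto simp: V_def R_def)
    show "{x, y} \<in> Hr_edges 3 n" if "x \<in> R" "y \<in> V" "{U 2 1, y} \<in> Hr_edges 3 n" for x y
      using that by (cases y) (auto simp: V_def R_def Hr_edges_iff)
    show "{U 2 1, U 2 1} \<notin> Hr_edges 3 n" by simp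
  qed
  also have "V - R = {V2, W2, V1, W1, U 1 1, U 2 1, U 2 2, U 3 2}"
    using n by (auto simp: V_def R_def core_verts_def)
  finally show ?thesis
    unfolding V_def
    using homeomorphic_matching_3[OF n] homeomorphic_imp_homotopy_equivalent_space homotopy_eqv_trans
    by blast
qed

lemma homeomorphic_double_suspension_core:
  assumes k: "k \<ge> 2"
  shows "indep_realization (insert V2 (insert W2 (insert V1 (insert W1 (core_verts k n))))) (Hr_edges k n)
    homeomorphic_space suspension (suspension (indep_realization (core_verts k n) (Hr_edges k n)))"
proof -
  have core_not_adj: "\<not> H_adj k n x V1 \<and> \<not> H_adj k n x V2" if "x \<in> core_verts k n" for x
    using that k by (cases x) auto
  interpret outer: isolated_edge "insert V1 (insert W1 (core_verts k n))" "Hr_edges k n" V2 W2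
    using finite_core_verts card_Hr_edges core_not_adj by unfold_locales (auto simp: Hr_edges_iff)
  interpret inner: isolated_edge "core_verts k n" "Hr_edges k n" V1 W1
    using finite_core_verts card_Hr_edges core_not_adj by unfold_locales (auto simp: Hr_edges_iff)
  have "core_verts k n \<noteq> {}"
    by (auto simp: core_verts_def)
  then show ?thesis
    using outer.homeomorphic_suspension inner.homeomorphic_suspension homeomorphic_space_suspension
      homeomorphic_space_trans by (fastforce simp: Hr_edges_iff)
qed

definition core_shift :: "nat \<Rightarrow> vert \<Rightarrow> vert" where
  "core_shift k x = (case x of U i j \<Rightarrow> if i = 1 then V1 else if i = k then V2 else U (i - 1) j | _ \<Rightarrow> V1)"

lemma core_shift_U: "core_shift k (U i j) = (if i = 1 then V1 else if i = k then V2 else U (i - 1) j)"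
  by (simp add: core_shift_def)

lemma bij_betw_core_shift:
  assumes k: "k \<ge> 4"
  shows "bij_betw (core_shift k) (core_verts k n) (H_verts (k - 2) n)"
  unfolding bij_betw_def
proof
  show "inj_on (core_shift k) (core_verts k n)"
  proof (rule inj_onI)
    fix x y assume "x \<in> core_verts k n" "y \<in> core_verts k n" "core_shift k x = core_shift k y"
    then show "x = y"
      using k by (cases x; cases y) (auto simp: core_shift_U split: if_splits)
  qed
  show "core_shift k ` core_verts k n = H_verts (k - 2) n"
  proof (rule set_eqI)
    fix z
    have "z \<in> core_shift k ` core_verts k n" if "z \<in> H_verts (k - 2) n"
    proof (cases z)
      case (U i j)
      then have "z = core_shift k (U (i + 1) j)" "U (i + 1) j \<in> core_verts k n"
        using that k by (auto simp: core_shift_U)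
      then show ?thesis by blast
    next
      case V1
      then have "z = core_shift k (U 1 1)" "U 1 1 \<in> core_verts k n" by (auto simp: core_shift_U)
      then show ?thesis by blast
    next
      case V2
      then have "z = core_shift k (U k 2)" "U k 2 \<in> core_verts k n" using k by (auto simp: core_shift_U)
      then show ?thesis by blast
    qed (use that in auto)
    moreover have "z \<in> H_verts (k - 2) n" if "z \<in> core_shift k ` core_verts k n"
      using that k by (auto simp: core_verts_def core_shift_U)
    ultimately show "z \<in> core_shift k ` core_verts k n \<longleftrightarrow> z \<in> H_verts (k - 2) n"
      by blast
  qed
qed

lemma homeomorphic_core_H:
  assumes k: "k \<ge> 4" and n: "n \<ge> 2"
  shows "indep_realization (core_verts k n) (Hr_edges k n) homeomorphic_space
    indep_realization (H_verts (k - 2) n) (H_edges (k - 2) n)"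
proof (rule homeomorphic_indep_realization_relabel[OF bij_betw_core_shift[OF k]
      finite_core_verts card_Hr_edges card_H_edges])
  fix x y assume "x \<in> core_verts k n" "y \<in> core_verts k n"
  then show "{x, y} \<in> Hr_edges k n \<longleftrightarrow> {core_shift k x, core_shift k y} \<in> H_edges (k - 2) n"
    using k n by (cases x; cases y) (auto simp: Hr_edges_iff H_edges_iff core_shift_U)
qed

theorem mainTheorem16:
  fixes n :: nat
  assumes "n \<ge> 3"
  shows "(geometric_realization (independence_complex (Hr_verts 2 n) (Hr_edges 2 n))
           homotopy_equivalent_space nsphere 2) \<and>
         (geometric_realization (independence_complex (Hr_verts 3 n) (Hr_edges 3 n))
           homotopy_equivalent_space nsphere 3) \<and>
         (\<forall>k\<ge>4. geometric_realization (independence_complex (Hr_verts k n) (Hr_edges k n))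
           homotopy_equivalent_space
             suspension (suspension (geometric_realization
               (independence_complex (H_verts (k - 2) n) (H_edges (k - 2) n)))))"
proof (intro conjI allI impI)
  have n: "n \<ge> 2" using assms by simp
  have "indep_realization (Hr_verts 2 n) (Hr_edges 2 n) homotopy_equivalent_space
      indep_realization (insert V2 (insert W2 (insert V1 (insert W1 (core_verts 2 n))))) (Hr_edges 2 n)"
    using n by (intro homotopy_equivalent_Hr_core) auto
  also have "\<dots> homotopy_equivalent_space nsphere 2"
    by (intro homeomorphic_imp_homotopy_equivalent_space homeomorphic_core_2 n)
  finally show "indep_realization (Hr_verts 2 n) (Hr_edges 2 n) homotopy_equivalent_space nsphere 2" .
  have "indep_realization (Hr_verts 3 n) (Hr_edges 3 n) homotopy_equivalent_space
      indep_realization (insert V2 (insert W2 (insert V1 (insert W1 (core_verts 3 n))))) (Hr_edges 3 n)"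
    using n by (intro homotopy_equivalent_Hr_core) auto
  also have "\<dots> homotopy_equivalent_space nsphere 3"
    by (intro homotopy_equivalent_core_3 n)
  finally show "indep_realization (Hr_verts 3 n) (Hr_edges 3 n) homotopy_equivalent_space nsphere 3" .
  fix k :: nat assume k: "k \<ge> 4"
  have "indep_realization (Hr_verts k n) (Hr_edges k n) homotopy_equivalent_space
      indep_realization (insert V2 (insert W2 (insert V1 (insert W1 (core_verts k n))))) (Hr_edges k n)"
    using n k by (intro homotopy_equivalent_Hr_core) auto
  also have "\<dots> homotopy_equivalent_space suspension (suspension (indep_realization (core_verts k n) (Hr_edges k n)))"
    using k by (intro homeomorphic_imp_homotopy_equivalent_space homeomorphic_double_suspension_core) auto
  also have "\<dots> homotopy_equivalent_space
      suspension (suspension (indep_realization (H_verts (k - 2) n) (H_edges (k - 2) n)))"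
    by (intro homeomorphic_imp_homotopy_equivalent_space homeomorphic_space_suspension
        homeomorphic_core_H k n)
  finally show "indep_realization (Hr_verts k n) (Hr_edges k n) homotopy_equivalent_space
      suspension (suspension (indep_realization (H_verts (k - 2) n) (H_edges (k - 2) n)))" .
qed

end
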